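(* Let $M$ be a monoid and let $\chi,\chi'$ be elliptic $M$-trees. Then $D_\chi=D_{\chi'}$ if and only if $\chi\cong\chi'$.
   Context: Rooted trees $(r_0,T)$, depth (distance from $r_0$), rays (geodesics from a vertex down to $r_0$, or infinite paths $(\dots,\alpha_1,\alpha_0=r_0)$ with $\mathrm{dep}(\alpha_i)=i$), maximal rays, uniform rooted trees (all maximal rays of equal length), $\alpha\wedge\beta$ = longest common initial segment of rays, $|\cdot|$ = length of a ray. An elliptic contraction is a depth-preserving distance-non-increasing map of vertex sets. An elliptic $M$-tree is $\chi=(r_0,T,\alpha,\theta)$ with $(r_0,T)$ uniform, $\alpha$ a maximal ray, and $\theta:M\to\mathrm{Ell}(r_0,T)$ a monoid homomorphism (action $v\mapsto vm$, extended componentwise to rays) with $\mathrm{Vert}(T)=\bigcup_i\alpha_iM$. $D_\chi(m,m')=|\alpha m\wedge\alpha m'|\in\mathbb N\cup\{\omega\}$. An isomorphism $\chi=(r_0,T,\alpha)\to\chi'=(r'_0,T',\alpha')$ is a bijective elliptic contraction $\varphi$ with $\alpha\varphi=\alpha'$ and $(vm)\varphi=(v\varphi)m$ for all vertices $v$ and $m\in M$. *)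

theory Defs
  imports Main "HOL-Library.Extended_Nat"
begin

text \<open>A rooted tree (r0, T) is encoded by its vertex set V, its root r0 and the
parent map par (the unique neighbour of a non-root vertex v that is closer to r0).
Every vertex must reach r0 by iterating par; this is exactly a rooted tree.\<close>

definition rooted_tree :: "'v set \<Rightarrow> 'v \<Rightarrow> ('v \<Rightarrow> 'v) \<Rightarrow> bool" where
  "rooted_tree V r0 par \<longleftrightarrow> r0 \<in> V \<and> (\<forall>v\<in>V. v \<noteq> r0 \<longrightarrow> par v \<in> V)
     \<and> (\<forall>v\<in>V. \<exists>n. (par ^^ n) v = r0)"

definition tree_adj :: "'v set \<Rightarrow> 'v \<Rightarrow> ('v \<Rightarrow> 'v) \<Rightarrow> ('v \<times> 'v) set" where
  "tree_adj V r0 par = {(u, v). u \<in> V \<and> v \<in> V \<and>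
      ((u \<noteq> r0 \<and> par u = v) \<or> (v \<noteq> r0 \<and> par v = u))}"

definition tree_dist :: "'v set \<Rightarrow> 'v \<Rightarrow> ('v \<Rightarrow> 'v) \<Rightarrow> 'v \<Rightarrow> 'v \<Rightarrow> nat" where
  "tree_dist V r0 par u v = (LEAST n. (u, v) \<in> (tree_adj V r0 par) ^^ n)"

definition dep :: "'v set \<Rightarrow> 'v \<Rightarrow> ('v \<Rightarrow> 'v) \<Rightarrow> 'v \<Rightarrow> nat" where
  "dep V r0 par v = tree_dist V r0 par r0 v"

text \<open>A ray of length L (L = \<infinity> for infinite rays) is given by its vertices
 \<rho> 0 = r0, \<rho> 1, ..., \<rho> i for enat i \<le> L, with dep (\<rho> i) = i and consecutive
 vertices adjacent. Values \<rho> i for i > L are irrelevant.\<close>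
definition is_ray :: "'v set \<Rightarrow> 'v \<Rightarrow> ('v \<Rightarrow> 'v) \<Rightarrow> enat \<Rightarrow> (nat \<Rightarrow> 'v) \<Rightarrow> bool" where
  "is_ray V r0 par L \<rho> \<longleftrightarrow> \<rho> 0 = r0
     \<and> (\<forall>i. enat i \<le> L \<longrightarrow> \<rho> i \<in> V \<and> dep V r0 par (\<rho> i) = i)
     \<and> (\<forall>i. enat (Suc i) \<le> L \<longrightarrow> (\<rho> i, \<rho> (Suc i)) \<in> tree_adj V r0 par)"

definition max_ray :: "'v set \<Rightarrow> 'v \<Rightarrow> ('v \<Rightarrow> 'v) \<Rightarrow> enat \<Rightarrow> (nat \<Rightarrow> 'v) \<Rightarrow> bool" where
  "max_ray V r0 par L \<rho> \<longleftrightarrow> is_ray V r0 par L \<rho> \<and>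
     \<not> (\<exists>L' \<rho>'. is_ray V r0 par L' \<rho>' \<and> L < L' \<and> (\<forall>i. enat i \<le> L \<longrightarrow> \<rho>' i = \<rho> i))"

definition uniform_tree :: "'v set \<Rightarrow> 'v \<Rightarrow> ('v \<Rightarrow> 'v) \<Rightarrow> bool" where
  "uniform_tree V r0 par \<longleftrightarrow> rooted_tree V r0 par \<and>
     (\<forall>L \<rho> L' \<rho>'. max_ray V r0 par L \<rho> \<longrightarrow> max_ray V r0 par L' \<rho>' \<longrightarrow> L = L')"

definition ell_contr :: "'v set \<Rightarrow> 'v \<Rightarrow> ('v \<Rightarrow> 'v) \<Rightarrow> 'w set \<Rightarrow> 'w \<Rightarrow> ('w \<Rightarrow> 'w)
    \<Rightarrow> ('v \<Rightarrow> 'w) \<Rightarrow> bool" where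
  "ell_contr V r0 par V' r0' par' f \<longleftrightarrow>
     (\<forall>v\<in>V. f v \<in> V' \<and> dep V' r0' par' (f v) = dep V r0 par v) \<and>
     (\<forall>u\<in>V. \<forall>v\<in>V. tree_dist V' r0' par' (f u) (f v) \<le> tree_dist V r0 par u v)"

text \<open>Elliptic M-tree (r0, T, \<alpha>, \<theta>); the homomorphism \<theta> is given as the right
  action act v m = v m, so act v 1 = v and act v (m * m') = act (act v m) m'.\<close>
definition elliptic_Mtree :: "'v set \<Rightarrow> 'v \<Rightarrow> ('v \<Rightarrow> 'v) \<Rightarrow> enat \<Rightarrow> (nat \<Rightarrow> 'v)
    \<Rightarrow> ('v \<Rightarrow> 'm::monoid_mult \<Rightarrow> 'v) \<Rightarrow> bool" where
  "elliptic_Mtree V r0 par L \<alpha> act \<longleftrightarrow>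
     uniform_tree V r0 par \<and> max_ray V r0 par L \<alpha> \<and>
     (\<forall>m. ell_contr V r0 par V r0 par (\<lambda>v. act v m)) \<and>
     (\<forall>v\<in>V. act v 1 = v) \<and>
     (\<forall>v\<in>V. \<forall>m m'. act v (m * m') = act (act v m) m') \<and>
     V = (\<Union>i\<in>{i. enat i \<le> L}. range (act (\<alpha> i)))"

definition D_chi :: "enat \<Rightarrow> (nat \<Rightarrow> 'v) \<Rightarrow> ('v \<Rightarrow> 'm \<Rightarrow> 'v) \<Rightarrow> 'm \<Rightarrow> 'm \<Rightarrow> enat" where
  "D_chi L \<alpha> act m m' =
     Sup {enat j | j. enat j \<le> L \<and> (\<forall>i\<le>j. act (\<alpha> i) m = act (\<alpha> i) m')}"

definition Mtree_iso :: "'v set \<Rightarrow> 'v \<Rightarrow> ('v \<Rightarrow> 'v) \<Rightarrow> enat \<Rightarrow> (nat \<Rightarrow> 'v) \<Rightarrow> ('v \<Rightarrow> 'm \<Rightarrow> 'v)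
    \<Rightarrow> 'w set \<Rightarrow> 'w \<Rightarrow> ('w \<Rightarrow> 'w) \<Rightarrow> enat \<Rightarrow> (nat \<Rightarrow> 'w) \<Rightarrow> ('w \<Rightarrow> 'm \<Rightarrow> 'w)
    \<Rightarrow> ('v \<Rightarrow> 'w) \<Rightarrow> bool" where
  "Mtree_iso V r0 par L \<alpha> act V' r0' par' L' \<alpha>' act' \<phi> \<longleftrightarrow>
     bij_betw \<phi> V V' \<and> ell_contr V r0 par V' r0' par' \<phi> \<and>
     L = L' \<and> (\<forall>i. enat i \<le> L \<longrightarrow> \<phi> (\<alpha> i) = \<alpha>' i) \<and>
     (\<forall>v\<in>V. \<forall>m. \<phi> (act v m) = act' (\<phi> v) m)"

end

theory Submission
  imports Defs
begin

(* In an elliptic M-tree every vertex has the form \<alpha>_i m, with i its depth,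
   and elliptic contractions commute with the parent map.  Hence two translates \<alpha>_i m and
   \<alpha>_i m' agree iff they agree at every depth below i, i.e. iff i \<le> D(m,m'); and
   D(1,1) is the length L of \<alpha>.  So D determines both L and exactly which pairs (i,m),
   (i,m') name the same vertex.  If D = D', the assignment \<alpha>_i m \<mapsto> \<alpha>'_i m is therefore a
   well-defined bijection; it preserves depth and commutes with the parent maps, hence is
   distance-non-increasing, and it is M-equivariant: an isomorphism.  Conversely an
   isomorphism is injective and sends \<alpha>_i m to \<alpha>'_i m, so it preserves the relation
   "\<alpha>_i m = \<alpha>_i m'", hence D. *)

section \<open>Rooted trees through the parent map\<close>

text \<open>The height of a vertex: the number of parent steps needed to reach the root.
  It will turn out to coincide with the depth.\<close>
definition par_height :: "'v \<Rightarrow> ('v \<Rightarrow> 'v) \<Rightarrow> 'v \<Rightarrow> nat" where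
  "par_height r0 par v = (LEAST n. (par ^^ n) v = r0)"

lemma par_height_reaches_root:
  "rooted_tree V r0 par \<Longrightarrow> v \<in> V \<Longrightarrow> (par ^^ par_height r0 par v) v = r0"
  unfolding par_height_def rooted_tree_def by (metis (mono_tags, lifting) LeastI_ex)

lemma par_height_eq_0_iff:
  assumes "rooted_tree V r0 par" "v \<in> V"
  shows "par_height r0 par v = 0 \<longleftrightarrow> v = r0"
proof
  assume "par_height r0 par v = 0"
  then show "v = r0" using par_height_reaches_root[OF assms] by simp
next
  assume "v = r0"
  then show "par_height r0 par v = 0" unfolding par_height_def by (simp add: Least_eq_0)
qed

lemma par_height_par:
  assumes "rooted_tree V r0 par" "v \<in> V" "v \<noteq> r0"
  shows "par_height r0 par v = Suc (par_height r0 par (par v))"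
proof -
  obtain k where k: "par_height r0 par v = Suc k"
    using par_height_eq_0_iff[OF assms(1,2)] assms(3) not0_implies_Suc by blast
  have reach: "(par ^^ k) (par v) = r0"
    using par_height_reaches_root[OF assms(1,2)] k by (simp only: funpow_Suc_right comp_apply)
  have "par_height r0 par (par v) = k" unfolding par_height_def
  proof (rule Least_equality[where P="\<lambda>n. (par ^^ n) (par v) = r0", OF reach])
    fix j assume "(par ^^ j) (par v) = r0"
    then have "(par ^^ Suc j) v = r0" by (simp only: funpow_Suc_right comp_apply)
    then have "par_height r0 par v \<le> Suc j" unfolding par_height_def by (rule Least_le)
    then show "k \<le> j" using k by simp
  qed
  then show ?thesis using k by simp
qed

lemma tree_adj_in_V: "(u, v) \<in> tree_adj V r0 par \<Longrightarrow> u \<in> V \<and> v \<in> V"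
  unfolding tree_adj_def by auto

lemma path_to_root:
  assumes "rooted_tree V r0 par"
  shows "v \<in> V \<Longrightarrow> par_height r0 par v = n \<Longrightarrow>
    (r0, v) \<in> tree_adj V r0 par ^^ n \<and> (v, r0) \<in> tree_adj V r0 par ^^ n"
proof (induction n arbitrary: v)
  case 0
  then show ?case using par_height_eq_0_iff[OF assms] by auto
next
  case (Suc n)
  then have ne: "v \<noteq> r0" using par_height_eq_0_iff[OF assms, of v] by auto
  have pv: "par v \<in> V" using assms Suc(2) ne unfolding rooted_tree_def by auto
  have "par_height r0 par (par v) = n" using par_height_par[OF assms Suc(2) ne] Suc(3) by simp
  moreover have "(par v, v) \<in> tree_adj V r0 par" "(v, par v) \<in> tree_adj V r0 par"
    using pv Suc(2) ne unfolding tree_adj_def by auto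
  ultimately show ?case using Suc.IH[OF pv] by (meson relpow_Suc_I relpow_Suc_I2)
qed

text \<open>Each edge changes the height by one, so no shorter path reaches a vertex from the root.\<close>
lemma par_height_le_path_length:
  assumes "rooted_tree V r0 par"
  shows "(r0, v) \<in> tree_adj V r0 par ^^ n \<Longrightarrow> par_height r0 par v \<le> n"
proof (induction n arbitrary: v)
  case 0
  then show ?case using par_height_eq_0_iff[OF assms, of r0] assms
    unfolding rooted_tree_def by auto
next
  case (Suc n)
  then obtain u where u: "(r0, u) \<in> tree_adj V r0 par ^^ n" "(u, v) \<in> tree_adj V r0 par"
    by auto
  have IH: "par_height r0 par u \<le> n" using Suc.IH[OF u(1)] .
  have uv: "u \<in> V" "v \<in> V" using tree_adj_in_V[OF u(2)] by auto
  from u(2) consider "u \<noteq> r0" "par u = v" | "v \<noteq> r0" "par v = u"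
    unfolding tree_adj_def by auto
  then show ?case
    using par_height_par[OF assms uv(1)] par_height_par[OF assms uv(2)] IH by cases auto
qed

lemma dep_eq_par_height:
  assumes "rooted_tree V r0 par" "v \<in> V"
  shows "dep V r0 par v = par_height r0 par v"
  unfolding dep_def tree_dist_def
proof (rule Least_equality)
  show "(r0, v) \<in> tree_adj V r0 par ^^ par_height r0 par v"
    using path_to_root[OF assms refl] by blast
  fix y assume "(r0, v) \<in> tree_adj V r0 par ^^ y"
  then show "par_height r0 par v \<le> y" by (rule par_height_le_path_length[OF assms(1)])
qed

text \<open>Any two vertices are joined through the root, so distances are attained.\<close>
lemma tree_connected:
  assumes "rooted_tree V r0 par" "u \<in> V" "v \<in> V"
  shows "\<exists>n. (u, v) \<in> tree_adj V r0 par ^^ n"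
proof -
  have "(u, r0) \<in> tree_adj V r0 par ^^ par_height r0 par u"
    "(r0, v) \<in> tree_adj V r0 par ^^ par_height r0 par v"
    using path_to_root[OF assms(1,2) refl] path_to_root[OF assms(1,3) refl] by auto
  then have "(u, v) \<in> tree_adj V r0 par ^^ (par_height r0 par u + par_height r0 par v)"
    unfolding relpow_add by blast
  then show ?thesis by blast
qed

lemma tree_dist_path:
  assumes "rooted_tree V r0 par" "u \<in> V" "v \<in> V"
  shows "(u, v) \<in> tree_adj V r0 par ^^ tree_dist V r0 par u v"
  unfolding tree_dist_def using tree_connected[OF assms] by (rule LeastI_ex)

lemma tree_dist_le_1_imp_adj:
  assumes "rooted_tree V r0 par" "u \<in> V" "v \<in> V" "tree_dist V r0 par u v \<le> 1"
  shows "u = v \<or> (u, v) \<in> tree_adj V r0 par"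
proof -
  have "tree_dist V r0 par u v = 0 \<or> tree_dist V r0 par u v = 1" using assms(4) by auto
  then show ?thesis using tree_dist_path[OF assms(1-3)] by (metis relpow_0_E relpow_1)
qed

lemma tree_dist_par_le_1:
  assumes "rooted_tree V r0 par" "v \<in> V" "v \<noteq> r0"
  shows "tree_dist V r0 par (par v) v \<le> 1"
proof -
  have "par v \<in> V" using assms unfolding rooted_tree_def by auto
  then have "(par v, v) \<in> tree_adj V r0 par ^^ 1" using assms unfolding tree_adj_def by auto
  then show ?thesis unfolding tree_dist_def by (rule Least_le)
qed

lemma adj_height_Suc_imp_par:
  assumes "rooted_tree V r0 par" "(x, y) \<in> tree_adj V r0 par"
    "par_height r0 par y = Suc (par_height r0 par x)"
  shows "y \<noteq> r0 \<and> par y = x"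
proof -
  have "x \<in> V" using tree_adj_in_V[OF assms(2)] by auto
  from assms(2) consider "x \<noteq> r0" "par x = y" | "y \<noteq> r0" "par y = x"
    unfolding tree_adj_def by auto
  then show ?thesis using par_height_par[OF assms(1) \<open>x \<in> V\<close>] assms(3) by cases auto
qed

text \<open>Elliptic contractions commute with the parent maps: the image of an edge has
  length at most one and joins consecutive levels.\<close>
lemma ell_contr_par:
  assumes "rooted_tree V r0 par" "rooted_tree V' r0' par'"
    "ell_contr V r0 par V' r0' par' f" "v \<in> V" "v \<noteq> r0"
  shows "f (par v) = par' (f v)"
proof -
  have pv: "par v \<in> V" using assms unfolding rooted_tree_def by auto
  have fin: "f v \<in> V'" "f (par v) \<in> V'" using assms(3,4) pv unfolding ell_contr_def by auto
  have "dep V' r0' par' (f v) = dep V r0 par v" "dep V' r0' par' (f (par v)) = dep V r0 par (par v)"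
    using assms(3,4) pv unfolding ell_contr_def by auto
  then have heights: "par_height r0' par' (f v) = Suc (par_height r0' par' (f (par v)))"
    using dep_eq_par_height[OF assms(1)] dep_eq_par_height[OF assms(2)] fin pv assms(4)
      par_height_par[OF assms(1,4,5)] by simp
  have "tree_dist V' r0' par' (f (par v)) (f v) \<le> tree_dist V r0 par (par v) v"
    using assms(3,4) pv unfolding ell_contr_def by auto
  also have "\<dots> \<le> 1" by (rule tree_dist_par_le_1[OF assms(1,4,5)])
  finally have "f (par v) = f v \<or> (f (par v), f v) \<in> tree_adj V' r0' par'"
    using tree_dist_le_1_imp_adj[OF assms(2) fin(2,1)] by blast
  then show ?thesis using heights adj_height_Suc_imp_par[OF assms(2)] by auto
qed

text \<open>Conversely, a map that preserves the root and commutes with the parent maps sends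
  edges to edges, hence does not increase distances.\<close>
lemma par_hom_path:
  fixes f :: "'a \<Rightarrow> 'b"
  assumes "\<And>u. u \<in> V \<Longrightarrow> f u \<in> V'"
    "\<And>u. u \<in> V \<Longrightarrow> f u = r0' \<longleftrightarrow> u = r0"
    "\<And>u. u \<in> V \<Longrightarrow> u \<noteq> r0 \<Longrightarrow> f (par u) = par' (f u)"
  shows "(u, v) \<in> tree_adj V r0 par ^^ n \<Longrightarrow> (f u, f v) \<in> tree_adj V' r0' par' ^^ n"
proof (induction n arbitrary: v)
  case 0
  then show ?case by simp
next
  case (Suc n)
  then obtain w where w: "(u, w) \<in> tree_adj V r0 par ^^ n" "(w, v) \<in> tree_adj V r0 par"
    by auto
  have "(f w, f v) \<in> tree_adj V' r0' par'"
    using w(2) assms unfolding tree_adj_def by auto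
  then show ?case using Suc.IH[OF w(1)] by auto
qed

lemma par_hom_dist_le:
  assumes "rooted_tree V r0 par" "u \<in> V" "v \<in> V"
    "\<And>u. u \<in> V \<Longrightarrow> f u \<in> V'"
    "\<And>u. u \<in> V \<Longrightarrow> f u = r0' \<longleftrightarrow> u = r0"
    "\<And>u. u \<in> V \<Longrightarrow> u \<noteq> r0 \<Longrightarrow> f (par u) = par' (f u)"
  shows "tree_dist V' r0' par' (f u) (f v) \<le> tree_dist V r0 par u v"
proof -
  have "(f u, f v) \<in> tree_adj V' r0' par' ^^ tree_dist V r0 par u v"
    using par_hom_path[of V f V' r0' r0 par par'] assms(4-6) tree_dist_path[OF assms(1-3)]
    by blast
  then show ?thesis unfolding tree_dist_def by (rule Least_le)
qed

section \<open>One elliptic M-tree\<close>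

context
  fixes V :: "'v set" and r0 :: 'v and par :: "'v \<Rightarrow> 'v" and L :: enat
    and \<alpha> :: "nat \<Rightarrow> 'v" and act :: "'v \<Rightarrow> 'm::monoid_mult \<Rightarrow> 'v"
  assumes E: "elliptic_Mtree V r0 par L \<alpha> act"
begin

lemma Mtree_rooted: "rooted_tree V r0 par"
  using E unfolding elliptic_Mtree_def uniform_tree_def by auto

lemma Mtree_ray: "is_ray V r0 par L \<alpha>"
  using E unfolding elliptic_Mtree_def max_ray_def by blast

lemma Mtree_ray_root: "\<alpha> 0 = r0"
  using Mtree_ray unfolding is_ray_def by auto

lemma Mtree_ray_vertex:
  assumes "enat i \<le> L" shows "\<alpha> i \<in> V \<and> par_height r0 par (\<alpha> i) = i"
  using Mtree_ray assms dep_eq_par_height[OF Mtree_rooted] unfolding is_ray_def by auto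

lemma Mtree_vertices: "v \<in> V \<longleftrightarrow> (\<exists>i m. enat i \<le> L \<and> v = act (\<alpha> i) m)"
proof -
  have "V = (\<Union>i\<in>{i. enat i \<le> L}. range (act (\<alpha> i)))"
    using E unfolding elliptic_Mtree_def by blast
  then show ?thesis by blast
qed

lemma Mtree_act_one: "v \<in> V \<Longrightarrow> act v 1 = v"
  using E unfolding elliptic_Mtree_def by blast

lemma Mtree_act_mult: "v \<in> V \<Longrightarrow> act v (m * n) = act (act v m) n"
  using E unfolding elliptic_Mtree_def by blast

lemma Mtree_contr: "ell_contr V r0 par V r0 par (\<lambda>v. act v m)"
  using E unfolding elliptic_Mtree_def by auto

lemma Mtree_act: "v \<in> V \<Longrightarrow> act v m \<in> V \<and> par_height r0 par (act v m) = par_height r0 par v"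
  using Mtree_contr[of m] dep_eq_par_height[OF Mtree_rooted] unfolding ell_contr_def by auto

lemma Mtree_act_par: "v \<in> V \<Longrightarrow> v \<noteq> r0 \<Longrightarrow> act (par v) m = par (act v m)"
  using ell_contr_par[OF Mtree_rooted Mtree_rooted Mtree_contr] by blast

text \<open>The root is fixed by every element, being the only vertex of height 0.\<close>
lemma Mtree_act_root: "act r0 m = r0"
proof -
  have "r0 \<in> V" using Mtree_rooted unfolding rooted_tree_def by auto
  then have "act r0 m \<in> V" "par_height r0 par (act r0 m) = 0"
    using Mtree_act[of r0 m] par_height_eq_0_iff[OF Mtree_rooted, of r0] by auto
  then show ?thesis using par_height_eq_0_iff[OF Mtree_rooted, of "act r0 m"] by simp
qed

lemma Mtree_ray_par:
  assumes "enat (Suc i) \<le> L"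
  shows "\<alpha> (Suc i) \<noteq> r0 \<and> par (\<alpha> (Suc i)) = \<alpha> i"
proof -
  have "(\<alpha> i, \<alpha> (Suc i)) \<in> tree_adj V r0 par"
    using Mtree_ray assms unfolding is_ray_def by auto
  moreover have "enat i \<le> L" using assms by (simp add: Suc_ile_eq order_less_imp_le)
  ultimately show ?thesis
    using adj_height_Suc_imp_par[OF Mtree_rooted] Mtree_ray_vertex assms by auto
qed

lemma Mtree_ray_ancestor:
  "enat (i + k) \<le> L \<Longrightarrow> act (\<alpha> i) m = (par ^^ k) (act (\<alpha> (i + k)) m)"
proof (induction k)
  case 0
  then show ?case by simp
next
  case (Suc k)
  have le: "enat (i + k) \<le> L" using Suc.prems by (simp add: Suc_ile_eq order_less_imp_le)
  have "act (\<alpha> (i + k)) m = par (act (\<alpha> (Suc (i + k))) m)"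
    using Mtree_act_par[of "\<alpha> (Suc (i + k))" m] Mtree_ray_par[of "i + k"]
      Mtree_ray_vertex[of "Suc (i + k)"] Suc.prems by simp
  then show ?case using Suc.IH[OF le] by (simp only: add_Suc_right funpow_Suc_right comp_apply)
qed

lemma Mtree_agree_below:
  "enat j \<le> L \<Longrightarrow> i \<le> j \<Longrightarrow> act (\<alpha> j) m = act (\<alpha> j) m' \<Longrightarrow> act (\<alpha> i) m = act (\<alpha> i) m'"
  using Mtree_ray_ancestor[of i "j - i" m] Mtree_ray_ancestor[of i "j - i" m'] by simp

lemma Mtree_agree_iff_le_D:
  assumes "enat i \<le> L"
  shows "act (\<alpha> i) m = act (\<alpha> i) m' \<longleftrightarrow> enat i \<le> D_chi L \<alpha> act m m'"
proof
  assume "act (\<alpha> i) m = act (\<alpha> i) m'"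
  then show "enat i \<le> D_chi L \<alpha> act m m'" unfolding D_chi_def
    by (intro Sup_upper) (use assms Mtree_agree_below in blast)
next
  assume le: "enat i \<le> D_chi L \<alpha> act m m'"
  show "act (\<alpha> i) m = act (\<alpha> i) m'"
  proof (cases i)
    case 0
    then show ?thesis using Mtree_ray_root Mtree_act_root by simp
  next
    case (Suc i0)
    have "enat i0 < enat i" using Suc by simp
    also note le
    finally obtain j where "enat i0 < enat j" "\<forall>k\<le>j. act (\<alpha> k) m = act (\<alpha> k) m'"
      unfolding D_chi_def by (auto simp: less_Sup_iff)
    then show ?thesis using Suc by simp
  qed
qed

lemma Mtree_D_diag: "D_chi L \<alpha> act 1 1 = L"
proof -
  have "Sup {enat j | j. enat j \<le> L} = L"
  proof (rule antisym)
    show "Sup {enat j | j. enat j \<le> L} \<le> L" by (rule Sup_least) auto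
    show "L \<le> Sup {enat j | j. enat j \<le> L}"
    proof (cases L)
      case (enat n)
      then show ?thesis by (intro Sup_upper) auto
    next
      case infinity
      have "enat (Suc n) \<le> Sup {enat j | j. enat j \<le> L}" for n
        by (rule Sup_upper) (use infinity in auto)
      then show ?thesis using infinity
        by (cases "Sup {enat j | j. enat j \<le> L}") (auto, metis Suc_n_not_le_n enat_ord_simps(1))
    qed
  qed
  then show ?thesis unfolding D_chi_def by simp
qed

end

section \<open>Two elliptic M-trees with the same D\<close>

lemma D_eq_same_length:
  assumes "elliptic_Mtree V r0 par L \<alpha> act" "elliptic_Mtree V' r0' par' L' \<alpha>' act'"
    and "D_chi L \<alpha> act = D_chi L' \<alpha>' act'"
  shows "L = L'"
  using Mtree_D_diag[OF assms(1)] Mtree_D_diag[OF assms(2)] assms(3) by metis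

text \<open>A coincidence \<alpha>_i m = \<alpha>_k m' forces i = k (by height) and then, through D,
  the corresponding coincidence \<alpha>'_i m = \<alpha>'_i m' in the other tree.\<close>
lemma D_eq_agreement_transfer:
  fixes act :: "'v \<Rightarrow> 'm::monoid_mult \<Rightarrow> 'v" and act' :: "'w \<Rightarrow> 'm \<Rightarrow> 'w"
  assumes E: "elliptic_Mtree V r0 par L \<alpha> act"
    and E': "elliptic_Mtree V' r0' par' L' \<alpha>' act'"
    and same_D: "D_chi L \<alpha> act = D_chi L' \<alpha>' act'"
    and i: "enat i \<le> L" and k: "enat k \<le> L" and eq: "act (\<alpha> i) m = act (\<alpha> k) m'"
  shows "i = k \<and> act' (\<alpha>' i) m = act' (\<alpha>' i) m'"
proof -
  have "i = par_height r0 par (act (\<alpha> i) m)"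
    using Mtree_ray_vertex[OF E i] Mtree_act[OF E, of "\<alpha> i" m] by simp
  also have "\<dots> = k"
    using eq Mtree_ray_vertex[OF E k] Mtree_act[OF E, of "\<alpha> k" m'] by simp
  finally have "i = k" .
  then have "enat i \<le> D_chi L' \<alpha>' act' m m'"
    using Mtree_agree_iff_le_D[OF E i] eq same_D by simp
  then show ?thesis
    using Mtree_agree_iff_le_D[OF E', of i] i D_eq_same_length[OF E E' same_D] \<open>i = k\<close> by simp
qed

context
  fixes V :: "'v set" and r0 :: 'v and par :: "'v \<Rightarrow> 'v" and L :: enat
    and \<alpha> :: "nat \<Rightarrow> 'v" and act :: "'v \<Rightarrow> 'm::monoid_mult \<Rightarrow> 'v"
    and V' :: "'w set" and r0' :: 'w and par' :: "'w \<Rightarrow> 'w" and L' :: enat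
    and \<alpha>' :: "nat \<Rightarrow> 'w" and act' :: "'w \<Rightarrow> 'm \<Rightarrow> 'w"
  assumes E: "elliptic_Mtree V r0 par L \<alpha> act"
    and E': "elliptic_Mtree V' r0' par' L' \<alpha>' act'"
    and same_D: "D_chi L \<alpha> act = D_chi L' \<alpha>' act'"
begin

lemma same_length: "L = L'"
  using D_eq_same_length[OF E E' same_D] .

lemma agreement_transfer:
  "enat i \<le> L \<Longrightarrow> enat k \<le> L \<Longrightarrow> act (\<alpha> i) m = act (\<alpha> k) m'
    \<Longrightarrow> i = k \<and> act' (\<alpha>' i) m = act' (\<alpha>' i) m'"
  using D_eq_agreement_transfer[OF E E' same_D] .

lemma agreement_transfer_back:
  "enat i \<le> L \<Longrightarrow> enat k \<le> L \<Longrightarrow> act' (\<alpha>' i) m = act' (\<alpha>' k) m'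
    \<Longrightarrow> act (\<alpha> i) m = act (\<alpha> k) m'"
  using D_eq_agreement_transfer[OF E' E same_D[symmetric], of i k m m'] same_length by auto

definition transport :: "'v \<Rightarrow> 'w" where
  "transport v = (SOME w. \<exists>i m. enat i \<le> L \<and> v = act (\<alpha> i) m \<and> w = act' (\<alpha>' i) m)"

lemma transport_act:
  assumes i: "enat i \<le> L" shows "transport (act (\<alpha> i) m) = act' (\<alpha>' i) m"
proof -
  have "\<exists>w i2 m2. enat i2 \<le> L \<and> act (\<alpha> i) m = act (\<alpha> i2) m2 \<and> w = act' (\<alpha>' i2) m2"
    using i by blast
  then have "\<exists>i2 m2. enat i2 \<le> L \<and> act (\<alpha> i) m = act (\<alpha> i2) m2
      \<and> transport (act (\<alpha> i) m) = act' (\<alpha>' i2) m2"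
    unfolding transport_def by (rule someI_ex)
  then obtain i2 m2 where i2: "enat i2 \<le> L" "act (\<alpha> i) m = act (\<alpha> i2) m2"
    "transport (act (\<alpha> i) m) = act' (\<alpha>' i2) m2" by blast
  then show ?thesis using agreement_transfer[OF i i2(1,2)] by auto
qed

lemma transport_vertex:
  assumes "v \<in> V"
  obtains i m where "enat i \<le> L" "v = act (\<alpha> i) m" "transport v = act' (\<alpha>' i) m"
proof -
  obtain i m where "enat i \<le> L" "v = act (\<alpha> i) m"
    using Mtree_vertices[OF E, THEN iffD1, OF assms] by blast
  then show thesis using that transport_act by blast
qed

lemma transport_in: "v \<in> V \<Longrightarrow> transport v \<in> V'"
  by (elim transport_vertex) (use Mtree_vertices[OF E'] same_length in auto)

lemma transport_height: "v \<in> V \<Longrightarrow> par_height r0' par' (transport v) = par_height r0 par v"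
proof (elim transport_vertex)
  fix i m assume i: "enat i \<le> L" and v: "v = act (\<alpha> i) m" "transport v = act' (\<alpha>' i) m"
  have "par_height r0' par' (act' (\<alpha>' i) m) = i"
    using Mtree_ray_vertex[OF E', of i] Mtree_act[OF E', of "\<alpha>' i" m] i same_length by simp
  moreover have "par_height r0 par (act (\<alpha> i) m) = i"
    using Mtree_ray_vertex[OF E i] Mtree_act[OF E, of "\<alpha> i" m] by simp
  ultimately show ?thesis using v by simp
qed

lemma transport_root: "u \<in> V \<Longrightarrow> transport u = r0' \<longleftrightarrow> u = r0"
  using par_height_eq_0_iff[OF Mtree_rooted[OF E], of u]
    par_height_eq_0_iff[OF Mtree_rooted[OF E'], of "transport u"]
    transport_in[of u] transport_height[of u] by simp

text \<open>The transport commutes with the parent maps, since \<alpha>_(j+1) m has parent \<alpha>_j m.\<close>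
lemma transport_par:
  assumes u: "u \<in> V" "u \<noteq> r0" shows "transport (par u) = par' (transport u)"
proof -
  obtain i m where im: "enat i \<le> L" "u = act (\<alpha> i) m"
    using Mtree_vertices[OF E] u(1) by blast
  have "i \<noteq> 0"
  proof
    assume "i = 0"
    then have "u = r0" using im Mtree_ray_root[OF E] Mtree_act_root[OF E] by simp
    then show False using u(2) by contradiction
  qed
  then obtain j where j: "i = Suc j" using not0_implies_Suc by blast
  have jL: "enat j \<le> L" using im(1) j by (simp add: Suc_ile_eq order_less_imp_le)
  have "par u = act (\<alpha> j) m"
    using Mtree_act_par[OF E, of "\<alpha> (Suc j)" m] Mtree_ray_par[OF E, of j]
      Mtree_ray_vertex[OF E, of "Suc j"] im j by simp
  then have "transport (par u) = act' (\<alpha>' j) m" using transport_act[OF jL] by simp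
  also have "\<dots> = par' (act' (\<alpha>' (Suc j)) m)"
    using Mtree_act_par[OF E', of "\<alpha>' (Suc j)" m] Mtree_ray_par[OF E', of j]
      Mtree_ray_vertex[OF E', of "Suc j"] im j same_length by simp
  also have "\<dots> = par' (transport u)" using transport_act im j by simp
  finally show ?thesis .
qed

text \<open>Injectivity is the transfer of coincidences from the second tree back to the first.\<close>
lemma transport_inj: "inj_on transport V"
proof
  fix u v assume u: "u \<in> V" and v: "v \<in> V" and eq: "transport u = transport v"
  obtain i m where i: "enat i \<le> L" "u = act (\<alpha> i) m" "transport u = act' (\<alpha>' i) m"
    using transport_vertex[OF u] by blast
  obtain k n where k: "enat k \<le> L" "v = act (\<alpha> k) n" "transport v = act' (\<alpha>' k) n"
    using transport_vertex[OF v] by blast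
  have "act' (\<alpha>' i) m = act' (\<alpha>' k) n" using eq i(3) k(3) by simp
  then show "u = v" using agreement_transfer_back[OF i(1) k(1)] i(2) k(2) by simp
qed

lemma transport_surj: "transport ` V = V'"
proof
  show "transport ` V \<subseteq> V'" using transport_in by blast
  show "V' \<subseteq> transport ` V"
  proof
    fix w assume "w \<in> V'"
    then obtain i m where i: "enat i \<le> L" "w = act' (\<alpha>' i) m"
      using Mtree_vertices[OF E'] same_length by blast
    then have "w = transport (act (\<alpha> i) m)" "act (\<alpha> i) m \<in> V"
      using transport_act Mtree_vertices[OF E] by auto
    then show "w \<in> transport ` V" by blast
  qed
qed

text \<open>Depth-preserving and parent-compatible, the transport is an elliptic contraction.\<close>
lemma transport_ell_contr: "ell_contr V r0 par V' r0' par' transport"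
  unfolding ell_contr_def
proof (intro conjI ballI)
  fix v assume v: "v \<in> V"
  show "transport v \<in> V'" using transport_in[OF v] .
  show "dep V' r0' par' (transport v) = dep V r0 par v"
    using dep_eq_par_height[OF Mtree_rooted[OF E] v]
      dep_eq_par_height[OF Mtree_rooted[OF E'] transport_in[OF v]] transport_height[OF v] by simp
next
  fix u v assume "u \<in> V" "v \<in> V"
  then show "tree_dist V' r0' par' (transport u) (transport v) \<le> tree_dist V r0 par u v"
    by (rule par_hom_dist_le[OF Mtree_rooted[OF E] _ _ transport_in transport_root transport_par])
qed

text \<open>The transport maps the distinguished ray onto the distinguished ray (take m = 1).\<close>
lemma transport_ray: "enat i \<le> L \<Longrightarrow> transport (\<alpha> i) = \<alpha>' i"
  using transport_act[of i 1] Mtree_act_one[OF E, of "\<alpha> i"] Mtree_act_one[OF E', of "\<alpha>' i"]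
    Mtree_ray_vertex[OF E, of i] Mtree_ray_vertex[OF E', of i] same_length by simp

lemma transport_equivariant:
  assumes v: "v \<in> V" shows "transport (act v n) = act' (transport v) n"
proof -
  obtain i m where i: "enat i \<le> L" "v = act (\<alpha> i) m" "transport v = act' (\<alpha>' i) m"
    using transport_vertex[OF v] by blast
  have "act v n = act (\<alpha> i) (m * n)"
    using Mtree_act_mult[OF E, of "\<alpha> i" m n] Mtree_ray_vertex[OF E i(1)] i(2) by simp
  then have "transport (act v n) = act' (\<alpha>' i) (m * n)" using transport_act[OF i(1)] by simp
  also have "\<dots> = act' (transport v) n"
    using Mtree_act_mult[OF E', of "\<alpha>' i" m n] Mtree_ray_vertex[OF E', of i] i same_length
    by simp
  finally show ?thesis .
qed

lemma transport_iso: "Mtree_iso V r0 par L \<alpha> act V' r0' par' L' \<alpha>' act' transport"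
  unfolding Mtree_iso_def bij_betw_def
  by (intro conjI transport_inj transport_surj transport_ell_contr same_length allI impI ballI
      transport_ray transport_equivariant)

end

text \<open>An isomorphism is injective and maps \<alpha>_i m to \<alpha>'_i m, so it preserves
  the coincidences \<alpha>_i m = \<alpha>_i m' and therefore D.\<close>
lemma iso_imp_D_eq:
  fixes act :: "'v \<Rightarrow> 'm::monoid_mult \<Rightarrow> 'v" and act' :: "'w \<Rightarrow> 'm \<Rightarrow> 'w"
  assumes E: "elliptic_Mtree V r0 par L \<alpha> act"
    and iso: "Mtree_iso V r0 par L \<alpha> act V' r0' par' L' \<alpha>' act' \<phi>"
  shows "D_chi L \<alpha> act = D_chi L' \<alpha>' act'"
proof -
  have LL: "L = L'" and inj: "inj_on \<phi> V" and ray: "\<And>i. enat i \<le> L \<Longrightarrow> \<phi> (\<alpha> i) = \<alpha>' i"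
    and equiv: "\<And>v m. v \<in> V \<Longrightarrow> \<phi> (act v m) = act' (\<phi> v) m"
    using iso unfolding Mtree_iso_def bij_betw_def by auto
  have agree: "act (\<alpha> i) m = act (\<alpha> i) m' \<longleftrightarrow> act' (\<alpha>' i) m = act' (\<alpha>' i) m'"
    if i: "enat i \<le> L" for i m m'
  proof -
    have ai: "\<alpha> i \<in> V" using Mtree_ray_vertex[OF E i] by simp
    have "\<phi> (act (\<alpha> i) m) = act' (\<alpha>' i) m" "\<phi> (act (\<alpha> i) m') = act' (\<alpha>' i) m'"
      using equiv[OF ai] ray[OF i] by auto
    moreover have "act (\<alpha> i) m \<in> V" "act (\<alpha> i) m' \<in> V" using Mtree_act[OF E ai] by auto
    ultimately show ?thesis using inj unfolding inj_on_def by metis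
  qed
  have "{enat j | j. enat j \<le> L \<and> (\<forall>i\<le>j. act (\<alpha> i) m = act (\<alpha> i) m')} =
      {enat j | j. enat j \<le> L' \<and> (\<forall>i\<le>j. act' (\<alpha>' i) m = act' (\<alpha>' i) m')}" for m m'
  proof -
    have "(\<forall>i\<le>j. act (\<alpha> i) m = act (\<alpha> i) m') \<longleftrightarrow> (\<forall>i\<le>j. act' (\<alpha>' i) m = act' (\<alpha>' i) m')"
      if "enat j \<le> L" for j
      using agree that by (meson enat_ord_simps(1) order_trans)
    then show ?thesis using LL by blast
  qed
  then show ?thesis unfolding D_chi_def by (intro ext) simp
qed

theorem lemma4p7:
  fixes V :: "'v set" and r0 :: 'v and par :: "'v \<Rightarrow> 'v" and L :: enat
    and \<alpha> :: "nat \<Rightarrow> 'v" and act :: "'v \<Rightarrow> 'm::monoid_mult \<Rightarrow> 'v"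
    and V' :: "'w set" and r0' :: 'w and par' :: "'w \<Rightarrow> 'w" and L' :: enat
    and \<alpha>' :: "nat \<Rightarrow> 'w" and act' :: "'w \<Rightarrow> 'm \<Rightarrow> 'w"
  assumes "elliptic_Mtree V r0 par L \<alpha> act"
    and "elliptic_Mtree V' r0' par' L' \<alpha>' act'"
  shows "(D_chi L \<alpha> act = D_chi L' \<alpha>' act') \<longleftrightarrow>
         (\<exists>\<phi>. Mtree_iso V r0 par L \<alpha> act V' r0' par' L' \<alpha>' act' \<phi>)"
proof
  assume "D_chi L \<alpha> act = D_chi L' \<alpha>' act'"
  then show "\<exists>\<phi>. Mtree_iso V r0 par L \<alpha> act V' r0' par' L' \<alpha>' act' \<phi>"
    using transport_iso[OF assms] by blast
next
  assume "\<exists>\<phi>. Mtree_iso V r0 par L \<alpha> act V' r0' par' L' \<alpha>' act' \<phi>"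
  then obtain \<phi> where "Mtree_iso V r0 par L \<alpha> act V' r0' par' L' \<alpha>' act' \<phi>" ..
  then show "D_chi L \<alpha> act = D_chi L' \<alpha>' act'" by (rule iso_imp_D_eq[OF assms(1)])
qed

end
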